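(* Fix a real number $d$ with $0<d<1$ and let $c(x)=x^d$. For scheduling cost-sharing games with $n$ jobs and cost function $c$, the worst-case price of anarchy is $\Theta\!\left(n^{(1-d)/2}\right)$.
   Context: A game is specified by a cost function $c:\mathbb{Z}_{\ge 0}\to\mathbb{R}_{\ge0}$ (here $c(x)=x^d$, so $c(0)=0$), a time horizon $T$ with time slots $t=1,\dots,T$, and a set $J$ of $n$ jobs, each job $j$ having integer release time $r_j$ and integer deadline $d_j$ with $0<r_j<d_j<T$. An assignment $s$ gives each job $j$ a slot $s_j$ with $r_j\le s_j<d_j$ (the allowed interval $[r_j,d_j)$ of job $j$). The load of slot $t$ is $l_t(s)=|\{j: s_j=t\}|$ and the total cost is $C(s)=\sum_{t=1}^T c(l_t(s))$. Each job on slot $t$ pays the cost share $c(l_t(s))/l_t(s)$. An assignment $s$ is a Nash equilibrium (NE) if for every job $j$ and every slot $t\ne s_j$ with $t\in[r_j,d_j)$: $\frac{c(l_{s_j}(s))}{l_{s_j}(s)}\le \frac{c(l_t(s)+1)}{l_t(s)+1}$. The price of anarchy of a game is $\max_{s \text{ a NE}} C(s)/\min_{s^*} C(s^* )$, the minimum over all assignments; the worst-case price of anarchy for $n$ jobs is the supremum of this over all games with $n$ jobs. *)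

theory Defs
  imports Complex_Main "HOL-Library.Landau_Symbols"
begin

text \<open>Jobs are indexed by 0..<n; job j has release time r j and deadline dl j.
  Time slots are 1..T.\<close>

definition valid_game :: "nat \<Rightarrow> nat \<Rightarrow> (nat \<Rightarrow> nat) \<Rightarrow> (nat \<Rightarrow> nat) \<Rightarrow> bool" where
  "valid_game n T r dl \<longleftrightarrow> (\<forall>j<n. 0 < r j \<and> r j < dl j \<and> dl j < T)"

definition feasible :: "nat \<Rightarrow> (nat \<Rightarrow> nat) \<Rightarrow> (nat \<Rightarrow> nat) \<Rightarrow> (nat \<Rightarrow> nat) \<Rightarrow> bool" where
  "feasible n r dl s \<longleftrightarrow> (\<forall>j<n. r j \<le> s j \<and> s j < dl j)"

definition load :: "nat \<Rightarrow> (nat \<Rightarrow> nat) \<Rightarrow> nat \<Rightarrow> nat" where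
  "load n s t = card {j \<in> {0..<n}. s j = t}"

definition total_cost :: "(nat \<Rightarrow> real) \<Rightarrow> nat \<Rightarrow> nat \<Rightarrow> (nat \<Rightarrow> nat) \<Rightarrow> real" where
  "total_cost c n T s = (\<Sum>t\<in>{1..T}. c (load n s t))"

definition is_NE :: "(nat \<Rightarrow> real) \<Rightarrow> nat \<Rightarrow> (nat \<Rightarrow> nat) \<Rightarrow> (nat \<Rightarrow> nat) \<Rightarrow> (nat \<Rightarrow> nat) \<Rightarrow> bool" where
  "is_NE c n r dl s \<longleftrightarrow> feasible n r dl s \<and>
     (\<forall>j<n. \<forall>t. t \<noteq> s j \<and> r j \<le> t \<and> t < dl j \<longrightarrow>
        c (load n s (s j)) / real (load n s (s j)) \<le> c (load n s t + 1) / real (load n s t + 1))"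

text \<open>Worst-case price of anarchy over all games with n jobs:
  sup over games, NE s and assignments s* of C(s)/C(s*), which equals
  the sup over games of (max over NE of C(s)) / (min over s* of C(s*)).\<close>

definition worst_poa :: "(nat \<Rightarrow> real) \<Rightarrow> nat \<Rightarrow> real" where
  "worst_poa c n = Sup {total_cost c n T s / total_cost c n T s' | T r dl s s'.
      valid_game n T r dl \<and> is_NE c n r dl s \<and> feasible n r dl s'}"

end

theory Submission
  imports Defs
begin

text \<open>
  Upper bound: group the jobs by their slot \<tau> in an arbitrary assignment and let m be the size
  of a group. In an equilibrium a job pays l^(d-1) on a slot of load l, and every slot between its
  own slot and \<tau> carries a strictly smaller load. Group members on loads above sqrt m pay at most
  (sqrt m)^(d-1) each; the others sit on at most 2 sqrt m + 1 slots (distinct loads on each side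
  of \<tau>), each of cost at most (sqrt m)^d. So the group pays at most
  4 m^((1+d)/2) <= 4 n^((1-d)/2) m^d, and summing over \<tau> compares the equilibrium with the
  other assignment.

  Lower bound: a staircase with i jobs on slot i + 1 for i < k, where k is about sqrt (2n), and all
  windows reaching down to slot 1, is an equilibrium in which every job pays at least (2k)^(d-1),
  while moving all jobs to slot 1 costs only n^d.
\<close>

lemma sum_jobs_by_slot:
  fixes f :: "nat \<Rightarrow> real"
  assumes "finite A" "finite P" "s ` A \<subseteq> P"
  shows "(\<Sum>j\<in>A. f (s j)) = (\<Sum>p\<in>P. real (card {j\<in>A. s j = p}) * f p)"
proof -
  have "(\<Sum>j\<in>A. f (s j)) = (\<Sum>p\<in>P. \<Sum>j\<in>{j\<in>A. s j = p}. f (s j))"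
    by (rule sum.group[symmetric]) (use assms in auto)
  also have "\<dots> = (\<Sum>p\<in>P. \<Sum>j\<in>{j\<in>A. s j = p}. f p)"
    by (intro sum.cong) auto
  finally show ?thesis by simp
qed

lemma load_pos: "j < n \<Longrightarrow> 0 < load n s (s j)"
  unfolding load_def by (auto simp: card_gt_0_iff)

lemma total_cost_powr_eq_sum_shares:
  assumes "s ` {0..<n} \<subseteq> {1..T}"
  shows "total_cost (\<lambda>x. real x powr d) n T s = (\<Sum>j<n. real (load n s (s j)) powr (d - 1))"
proof -
  have "(\<Sum>j<n. real (load n s (s j)) powr (d - 1))
      = (\<Sum>t\<in>{1..T}. real (load n s t) * real (load n s t) powr (d - 1))"
    using assms sum_jobs_by_slot[of "{0..<n}" "{1..T}" s "\<lambda>t. real (load n s t) powr (d - 1)"]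
    by (simp add: load_def lessThan_atLeast0)
  also have "\<dots> = total_cost (\<lambda>x. real x powr d) n T s"
    by (simp add: total_cost_def powr_mult_base)
  finally show ?thesis ..
qed

lemma sum_shares_le_slot_costs:
  assumes "A \<subseteq> {0..<n}"
  shows "(\<Sum>j\<in>A. real (load n s (s j)) powr (d - 1)) \<le> (\<Sum>p\<in>s ` A. real (load n s p) powr d)"
proof -
  have fin: "finite A" using assms finite_subset by blast
  have "(\<Sum>j\<in>A. real (load n s (s j)) powr (d - 1))
      = (\<Sum>p\<in>s ` A. real (card {j\<in>A. s j = p}) * real (load n s p) powr (d - 1))"
    using sum_jobs_by_slot[of A "s ` A" s] fin by simp
  also have "\<dots> \<le> (\<Sum>p\<in>s ` A. real (load n s p) * real (load n s p) powr (d - 1))"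
  proof (intro sum_mono mult_right_mono)
    show "real (card {j\<in>A. s j = p}) \<le> real (load n s p)" for p
      unfolding load_def using assms by (intro of_nat_mono card_mono) auto
  qed simp
  also have "\<dots> = (\<Sum>p\<in>s ` A. real (load n s p) powr d)"
    by (simp add: powr_mult_base)
  finally show ?thesis .
qed

lemma powr_le_powr_iff_neg_exponent:
  fixes x y e :: real
  assumes "e < 0" "0 < x" "0 < y"
  shows "x powr e \<le> y powr e \<longleftrightarrow> y \<le> x"
  using assms powr_less_mono2_neg[of e x y] powr_mono2'[of e y x] by force

lemma is_NE_powr_iff:
  assumes "d < 1"
  shows "is_NE (\<lambda>x. real x powr d) n r dl s \<longleftrightarrow> feasible n r dl s \<and>
    (\<forall>j<n. \<forall>t. t \<noteq> s j \<and> r j \<le> t \<and> t < dl j \<longrightarrow> load n s t < load n s (s j))"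
proof -
  have share_le_iff: "real L powr d / real L \<le> real (l + 1) powr d / real (l + 1) \<longleftrightarrow> l < L"
    if "0 < L" for L l :: nat
  proof -
    have "real L powr d / real L = real L powr (d - 1)"
      using that by (simp add: powr_diff)
    moreover have "real (l + 1) powr d / real (l + 1) = real (l + 1) powr (d - 1)"
      by (simp add: powr_diff del: of_nat_Suc)
    moreover have "real L powr (d - 1) \<le> real (l + 1) powr (d - 1) \<longleftrightarrow> real (l + 1) \<le> real L"
      using that assms by (intro powr_le_powr_iff_neg_exponent) auto
    ultimately show ?thesis by (simp only: of_nat_le_iff) (simp add: Suc_le_eq)
  qed
  show ?thesis
    unfolding is_NE_def using share_le_iff load_pos by (metis (no_types, lifting))
qed

lemma NE_load_lt_within_window:
  assumes NE: "is_NE (\<lambda>x. real x powr d) n r dl s" and "d < 1" and "feasible n r dl s'"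
    and "j < n" "t \<noteq> s j" "min (s j) (s' j) \<le> t" "t \<le> max (s j) (s' j)"
  shows "load n s t < load n s (s j)"
proof -
  have "feasible n r dl s" and lt: "\<forall>j<n. \<forall>t. t \<noteq> s j \<and> r j \<le> t \<and> t < dl j \<longrightarrow> load n s t < load n s (s j)"
    using NE \<open>d < 1\<close> by (simp_all add: is_NE_powr_iff)
  then have "r j \<le> t" "t < dl j"
    using assms(3-) unfolding feasible_def by (auto simp: min_def max_def split: if_splits)
  then show ?thesis using lt assms(4,5) by blast
qed

text \<open>A group member on slot \<open>p\<close> does not deviate to a slot between \<open>p\<close> and \<open>\<tau>\<close>, so these are
  strictly less loaded; hence on each side of \<open>\<tau>\<close> the occupied slots carry distinct loads.\<close>

lemma card_low_load_slots:
  assumes NE: "is_NE (\<lambda>x. real x powr d) n r dl s" and "d < 1" and F: "feasible n r dl s'"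
  shows "card (s ` {j\<in>{0..<n}. s' j = \<tau> \<and> load n s (s j) \<le> b}) \<le> 2 * b + 1"
proof -
  define S where "S = s ` {j\<in>{0..<n}. s' j = \<tau> \<and> load n s (s j) \<le> b}"
  have load_S: "load n s p \<in> {1..b}" if p: "p \<in> S" for p
  proof -
    obtain j where "j < n" "load n s (s j) \<le> b" "p = s j" using p by (auto simp: S_def)
    then show ?thesis using load_pos[of j n s] by simp
  qed
  have lt: "load n s q < load n s p"
    if p: "p \<in> S" and q: "q \<noteq> p" "min p \<tau> \<le> q" "q \<le> max p \<tau>" for p q
  proof -
    obtain j where "j < n" "s' j = \<tau>" "s j = p" using p by (auto simp: S_def)
    then show ?thesis using NE_load_lt_within_window[OF NE \<open>d < 1\<close> F] q by blast
  qed
  have "inj_on (load n s) {p\<in>S. p < \<tau>}"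
  proof (rule linorder_inj_onI')
    fix p q assume "p \<in> {p\<in>S. p < \<tau>}" "q \<in> {p\<in>S. p < \<tau>}" "p < q"
    then have "load n s q < load n s p" by (intro lt) auto
    then show "load n s p \<noteq> load n s q" by simp
  qed
  then have left: "card {p\<in>S. p < \<tau>} \<le> card {1..b}"
    by (rule card_inj_on_le) (auto dest: load_S)
  have "inj_on (load n s) {p\<in>S. \<tau> < p}"
  proof (rule linorder_inj_onI')
    fix p q assume "p \<in> {p\<in>S. \<tau> < p}" "q \<in> {p\<in>S. \<tau> < p}" "p < q"
    then have "load n s p < load n s q" by (intro lt) auto
    then show "load n s p \<noteq> load n s q" by simp
  qed
  then have right: "card {p\<in>S. \<tau> < p} \<le> card {1..b}"
    by (rule card_inj_on_le) (auto dest: load_S)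
  have "finite S" by (simp add: S_def)
  moreover have "S \<subseteq> ({p\<in>S. p < \<tau>} \<union> {p\<in>S. \<tau> < p}) \<union> {\<tau>}" by auto
  ultimately have "card S \<le> card (({p\<in>S. p < \<tau>} \<union> {p\<in>S. \<tau> < p}) \<union> {\<tau>})"
    by (intro card_mono) auto
  also have "\<dots> \<le> card ({p\<in>S. p < \<tau>} \<union> {p\<in>S. \<tau> < p}) + card {\<tau>}"
    by (rule card_Un_le)
  also have "\<dots> \<le> card {p\<in>S. p < \<tau>} + card {p\<in>S. \<tau> < p} + 1"
    using card_Un_le by simp
  finally show ?thesis using left right unfolding S_def by simp
qed

lemma sum_low_load_shares_le:
  assumes NE: "is_NE (\<lambda>x. real x powr d) n r dl s" and "0 \<le> d" "d < 1" and F: "feasible n r dl s'"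
  shows "(\<Sum>j\<in>{j\<in>{0..<n}. s' j = \<tau> \<and> load n s (s j) \<le> b}. real (load n s (s j)) powr (d - 1))
           \<le> real (2 * b + 1) * real b powr d"
proof -
  let ?A = "{j\<in>{0..<n}. s' j = \<tau> \<and> load n s (s j) \<le> b}"
  have "(\<Sum>j\<in>?A. real (load n s (s j)) powr (d - 1)) \<le> (\<Sum>p\<in>s ` ?A. real (load n s p) powr d)"
    by (rule sum_shares_le_slot_costs) auto
  also have "\<dots> \<le> (\<Sum>p\<in>s ` ?A. real b powr d)"
    by (intro sum_mono powr_mono2) (use \<open>0 \<le> d\<close> in auto)
  also have "\<dots> = real (card (s ` ?A)) * real b powr d" by simp
  also have "\<dots> \<le> real (2 * b + 1) * real b powr d"
    using card_low_load_slots[OF NE \<open>d < 1\<close> F, of \<tau> b] by (intro mult_right_mono) auto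
  finally show ?thesis .
qed

lemma sum_group_shares_le:
  assumes NE: "is_NE (\<lambda>x. real x powr d) n r dl s" and "0 < d" "d < 1" and F: "feasible n r dl s'"
  shows "(\<Sum>j\<in>{j\<in>{0..<n}. s' j = \<tau>}. real (load n s (s j)) powr (d - 1))
           \<le> 4 * real (card {j\<in>{0..<n}. s' j = \<tau>}) powr ((1 + d) / 2)"
proof -
  define G where "G = {j\<in>{0..<n}. s' j = \<tau>}"
  define m where "m = real (card G)"
  define a where "a = m powr (1 / 2)"
  define b where "b = nat \<lfloor>a\<rfloor>"
  define share where "share j = real (load n s (s j)) powr (d - 1)" for j
  show ?thesis
  proof (cases "G = {}")
    case True
    then show ?thesis unfolding G_def[symmetric] by simp
  next
    case False
    then have "1 \<le> m" by (simp add: m_def G_def card_gt_0_iff Suc_le_eq)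
    then have "1 \<le> a" by (simp add: a_def ge_one_powr_ge_zero)
    have b_le: "real b \<le> a" and b_gt: "a < real b + 1"
      using \<open>1 \<le> a\<close> by (simp_all add: b_def)
    have high_exp: "m * a powr (d - 1) = m powr ((1 + d) / 2)"
      using \<open>1 \<le> m\<close> by (simp add: a_def powr_powr powr_mult_base field_simps)
    have low_exp: "a * a powr d = m powr ((1 + d) / 2)"
      by (simp add: a_def powr_powr add_divide_distrib powr_add)
    have "sum share G = sum share {j\<in>G. b < load n s (s j)} + sum share {j\<in>G. load n s (s j) \<le> b}"
      by (subst sum.union_disjoint[symmetric]) (auto simp: G_def intro: sum.cong)
    also have "sum share {j\<in>G. b < load n s (s j)} \<le> m powr ((1 + d) / 2)"
    proof -
      have "sum share {j\<in>G. b < load n s (s j)} \<le> (\<Sum>j\<in>{j\<in>G. b < load n s (s j)}. a powr (d - 1))"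
        unfolding share_def using \<open>d < 1\<close> \<open>1 \<le> a\<close> b_gt
        by (intro sum_mono powr_mono2') auto
      also have "\<dots> \<le> m * a powr (d - 1)"
        unfolding m_def by (auto intro!: mult_right_mono card_mono simp: G_def)
      finally show ?thesis using high_exp by simp
    qed
    also have "sum share {j\<in>G. load n s (s j) \<le> b} \<le> 3 * m powr ((1 + d) / 2)"
    proof -
      have "sum share {j\<in>G. load n s (s j) \<le> b} \<le> real (2 * b + 1) * real b powr d"
        unfolding share_def G_def using sum_low_load_shares_le[OF NE _ \<open>d < 1\<close> F] \<open>0 < d\<close>
        by (simp add: conj_assoc)
      also have "\<dots> \<le> (3 * a) * a powr d"
        using b_le \<open>1 \<le> a\<close> \<open>0 < d\<close> by (intro mult_mono powr_mono2) auto
      finally show ?thesis using low_exp by simp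
    qed
    finally show ?thesis by (simp add: share_def G_def m_def)
  qed
qed

lemma feasible_slots_in_horizon:
  assumes "valid_game n T r dl" "feasible n r dl s"
  shows "s ` {0..<n} \<subseteq> {1..T}"
proof
  fix t assume "t \<in> s ` {0..<n}"
  then obtain j where "j < n" "t = s j" by auto
  then have "0 < r j" "r j \<le> t" "t < dl j" "dl j < T"
    using assms by (auto simp: valid_game_def feasible_def)
  then show "t \<in> {1..T}" by simp
qed

lemma total_cost_NE_le:
  assumes "0 < d" "d < 1" and V: "valid_game n T r dl"
    and NE: "is_NE (\<lambda>x. real x powr d) n r dl s" and F: "feasible n r dl s'"
  shows "total_cost (\<lambda>x. real x powr d) n T s
           \<le> 4 * real n powr ((1 - d) / 2) * total_cost (\<lambda>x. real x powr d) n T s'"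
proof -
  let ?share = "\<lambda>j. real (load n s (s j)) powr (d - 1)"
  have "feasible n r dl s" using NE by (simp add: is_NE_def)
  then have "total_cost (\<lambda>x. real x powr d) n T s = (\<Sum>j<n. ?share j)"
    by (intro total_cost_powr_eq_sum_shares feasible_slots_in_horizon[OF V])
  also have "\<dots> = (\<Sum>\<tau>\<in>{1..T}. \<Sum>j\<in>{j\<in>{0..<n}. s' j = \<tau>}. ?share j)"
    unfolding lessThan_atLeast0
    using feasible_slots_in_horizon[OF V F] by (intro sum.group[symmetric]) auto
  also have "\<dots> \<le> (\<Sum>\<tau>\<in>{1..T}. 4 * real n powr ((1 - d) / 2) * real (load n s' \<tau>) powr d)"
  proof (rule sum_mono)
    fix \<tau>
    let ?m = "real (load n s' \<tau>)"
    have "?m \<le> real n"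
      unfolding load_def using card_mono[of "{0..<n}" "{j\<in>{0..<n}. s' j = \<tau>}"] by fastforce
    have "(\<Sum>j\<in>{j\<in>{0..<n}. s' j = \<tau>}. ?share j) \<le> 4 * ?m powr ((1 + d) / 2)"
      using sum_group_shares_le[OF NE assms(1,2) F] by (simp add: load_def)
    also have "?m powr ((1 + d) / 2) = ?m powr d * ?m powr ((1 - d) / 2)"
      by (simp add: powr_add[symmetric] field_simps)
    also have "\<dots> \<le> ?m powr d * real n powr ((1 - d) / 2)"
      using \<open>?m \<le> real n\<close> assms(2) by (intro mult_left_mono powr_mono2) auto
    finally show "(\<Sum>j\<in>{j\<in>{0..<n}. s' j = \<tau>}. ?share j)
        \<le> 4 * real n powr ((1 - d) / 2) * ?m powr d"
      by (simp add: mult_ac)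
  qed
  also have "\<dots> = 4 * real n powr ((1 - d) / 2) * total_cost (\<lambda>x. real x powr d) n T s'"
    by (simp add: total_cost_def sum_distrib_left)
  finally show ?thesis .
qed

lemma poa_ratio_le:
  assumes "0 < d" "d < 1" "valid_game n T r dl"
    "is_NE (\<lambda>x. real x powr d) n r dl s" "feasible n r dl s'"
  shows "total_cost (\<lambda>x. real x powr d) n T s / total_cost (\<lambda>x. real x powr d) n T s'
           \<le> 4 * real n powr ((1 - d) / 2)"
proof -
  have "0 \<le> total_cost (\<lambda>x. real x powr d) n T s'"
    by (simp add: total_cost_def sum_nonneg)
  then show ?thesis
    using total_cost_NE_le[OF assms] by (cases "total_cost (\<lambda>x. real x powr d) n T s' = 0")
      (simp_all add: divide_le_eq)
qed

definition tri :: "nat \<Rightarrow> nat" where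
  "tri i = (\<Sum>l\<le>i. l)"

lemma tri_0 [simp]: "tri 0 = 0" and tri_Suc: "tri (Suc i) = tri i + Suc i"
  by (simp_all add: tri_def)

lemma tri_mono: "i \<le> i' \<Longrightarrow> tri i \<le> tri i'"
  unfolding tri_def by (rule sum_mono2) auto

lemma le_tri: "i \<le> tri i"
  by (induction i) (auto simp: tri_Suc)

lemma square_le_double_tri: "k * k \<le> 2 * tri k"
  by (induction k) (auto simp: tri_Suc)

definition tri_index :: "nat \<Rightarrow> nat" where
  "tri_index j = (LEAST i. j < tri i)"

lemma tri_index_le_iff: "tri_index j \<le> i \<longleftrightarrow> j < tri i"
proof
  have "j < tri (Suc j)" using le_tri[of j] by (simp add: tri_Suc)
  then have "j < tri (tri_index j)" unfolding tri_index_def by (rule LeastI)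
  then show "j < tri i" if "tri_index j \<le> i"
    using tri_mono[OF that] by simp
next
  show "tri_index j \<le> i" if "j < tri i"
    unfolding tri_index_def using that by (rule Least_le)
qed

lemma Suc_le_tri_index_iff: "Suc i \<le> tri_index j \<longleftrightarrow> tri i \<le> j"
  using tri_index_le_iff[of j i] by linarith

lemma tri_index_eq_Suc_iff: "tri_index j = Suc i \<longleftrightarrow> tri i \<le> j \<and> j < tri (Suc i)"
  using Suc_le_tri_index_iff[of i j] tri_index_le_iff[of j "Suc i"] by auto

lemma tri_bracket:
  assumes "1 \<le> n"
  obtains k where "1 \<le> k" "tri k \<le> n" "n < tri (Suc k)"
proof
  show "1 \<le> tri_index n - 1" "tri (tri_index n - 1) \<le> n" "n < tri (Suc (tri_index n - 1))"
    using assms tri_index_le_iff[of n 1] tri_index_le_iff[of n "tri_index n - 1"]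
      tri_index_le_iff[of n "tri_index n"] by (auto simp: not_le tri_Suc)
qed

text \<open>Job \<open>j\<close> of block \<open>i = tri_index j\<close> goes to slot \<open>i + 1\<close>; the blocks from \<open>k\<close> on are merged,
  so slot \<open>i + 1\<close> holds \<open>i\<close> jobs for \<open>i < k\<close> and slot \<open>k + 1\<close> the remaining \<open>n - tri (k - 1)\<close>.\<close>

definition stair_slot :: "nat \<Rightarrow> nat \<Rightarrow> nat" where
  "stair_slot k j = min k (tri_index j) + 1"

lemma load_stair_slot:
  assumes "1 \<le> k" "tri k \<le> n"
  shows "load n (stair_slot k) (Suc i) = (if i < k then i else if i = k then n - tri (k - 1) else 0)"
proof -
  have tri_index_pos: "0 < tri_index j" for j
    using tri_index_le_iff[of j 0] by simp
  have "load n (stair_slot k) (Suc i) = card {j\<in>{0..<n}. min k (tri_index j) = i}"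
    by (simp add: load_def stair_slot_def)
  also have "\<dots> = (if i < k then i else if i = k then n - tri (k - 1) else 0)"
  proof (cases "i < k")
    case True
    show ?thesis
    proof (cases i)
      case 0
      then show ?thesis using tri_index_pos \<open>1 \<le> k\<close> by (simp add: min_def)
    next
      case (Suc i')
      have "tri (Suc i') \<le> n" using True Suc tri_mono[of "Suc i'" k] assms(2) by simp
      moreover have "min k (tri_index j) = i \<longleftrightarrow> tri i' \<le> j \<and> j < tri (Suc i')" for j
        using True Suc tri_index_eq_Suc_iff[of j i'] by (auto simp: min_def)
      ultimately have "{j\<in>{0..<n}. min k (tri_index j) = i} = {tri i'..<tri (Suc i')}"
        by (intro set_eqI) (simp only: mem_Collect_eq atLeastLessThan_iff, linarith)
      then show ?thesis using True Suc by (simp add: tri_Suc)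
    qed
  next
    case False
    have "tri (k - 1) \<le> n" using tri_mono[of "k - 1" k] assms(2) by simp
    moreover have "min k (tri_index j) = k \<longleftrightarrow> tri (k - 1) \<le> j" for j
      using \<open>1 \<le> k\<close> Suc_le_tri_index_iff[of "k - 1" j] by (auto simp: min_def)
    ultimately have "{j\<in>{0..<n}. min k (tri_index j) = k} = {tri (k - 1)..<n}"
      by (intro set_eqI) (simp only: mem_Collect_eq atLeastLessThan_iff, linarith)
    with False show ?thesis by (auto simp: min_def)
  qed
  finally show ?thesis .
qed

lemma stair_slot_is_NE:
  assumes "1 \<le> k" "tri k \<le> n" "d < 1"
  shows "is_NE (\<lambda>x. real x powr d) n (\<lambda>_. 1) (\<lambda>j. stair_slot k j + 1) (stair_slot k)"
proof -
  have level_le_load: "min k (tri_index j) \<le> load n (stair_slot k) (stair_slot k j)" for j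
  proof -
    have "k \<le> n - tri (k - 1)"
      using assms(1,2) tri_Suc[of "k - 1"] by simp
    then show ?thesis
      using load_stair_slot[OF assms(1,2), of "min k (tri_index j)"] by (simp add: stair_slot_def)
  qed
  show ?thesis
    unfolding is_NE_powr_iff[OF assms(3)]
  proof (intro conjI allI impI)
    show "feasible n (\<lambda>_. 1) (\<lambda>j. stair_slot k j + 1) (stair_slot k)"
      by (simp add: feasible_def stair_slot_def)
    fix j t
    assume "j < n" and t: "t \<noteq> stair_slot k j \<and> 1 \<le> t \<and> t < stair_slot k j + 1"
    then obtain i where i: "t = Suc i" by (cases t) auto
    with t have "i < min k (tri_index j)" by (auto simp: stair_slot_def)
    with i have "load n (stair_slot k) t = i"
      using load_stair_slot[OF assms(1,2), of i] by simp
    then show "load n (stair_slot k) t < load n (stair_slot k) (stair_slot k j)"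
      using level_le_load[of j] \<open>i < min k (tri_index j)\<close> by linarith
  qed
qed

lemma load_stair_slot_le:
  assumes "1 \<le> k" "tri k \<le> n" "n < tri (Suc k)"
  shows "load n (stair_slot k) t \<le> 2 * k"
proof (cases t)
  case 0
  then show ?thesis by (simp add: load_def stair_slot_def)
next
  case (Suc i)
  have "n - tri (k - 1) \<le> 2 * k"
    using assms tri_Suc[of k] tri_Suc[of "k - 1"] by simp
  then show ?thesis using Suc load_stair_slot[OF assms(1,2), of i] by auto
qed

lemma total_cost_const_slot:
  assumes "t \<in> {1..T}"
  shows "total_cost (\<lambda>x. real x powr d) n T (\<lambda>_. t) = real n powr d"
proof -
  have "total_cost (\<lambda>x. real x powr d) n T (\<lambda>_. t) = (\<Sum>j<n. real n powr (d - 1))"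
    using assms by (subst total_cost_powr_eq_sum_shares) (auto simp: load_def)
  also have "\<dots> = real n powr d"
    by (simp add: powr_mult_base)
  finally show ?thesis .
qed

lemma total_cost_stair_slot_ge:
  assumes "1 \<le> k" "tri k \<le> n" "n < tri (Suc k)" "d < 1" "k + 1 \<le> T"
  shows "real n * real (2 * k) powr (d - 1) \<le> total_cost (\<lambda>x. real x powr d) n T (stair_slot k)"
proof -
  have "real n * real (2 * k) powr (d - 1) = (\<Sum>j<n. real (2 * k) powr (d - 1))"
    by simp
  also have "\<dots> \<le> (\<Sum>j<n. real (load n (stair_slot k) (stair_slot k j)) powr (d - 1))"
  proof (intro sum_mono powr_mono2')
    fix j assume "j \<in> {..<n}"
    then show "0 < real (load n (stair_slot k) (stair_slot k j))" using load_pos by simp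
    show "real (load n (stair_slot k) (stair_slot k j)) \<le> real (2 * k)"
      unfolding of_nat_le_iff by (rule load_stair_slot_le[OF assms(1-3)])
  qed (use \<open>d < 1\<close> in simp)
  also have "\<dots> = total_cost (\<lambda>x. real x powr d) n T (stair_slot k)"
    using \<open>k + 1 \<le> T\<close>
    by (intro total_cost_powr_eq_sum_shares[symmetric]) (auto simp: stair_slot_def)
  finally show ?thesis .
qed

lemma staircase_ratio_bound:
  fixes d :: real
  assumes "d < 1" "1 \<le> k" "k * k \<le> 2 * n"
  shows "8 powr ((d - 1) / 2) * real n powr ((1 - d) / 2)
           \<le> real n * real (2 * k) powr (d - 1) / real n powr d"
proof -
  have "real (k * k) \<le> real (2 * n)"
    using assms(3) by linarith
  then have "real (2 * k) \<le> sqrt (8 * real n)"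
    by (intro real_le_rsqrt) (simp add: power2_eq_square)
  then have sqrt_le: "sqrt (8 * real n) powr (d - 1) \<le> real (2 * k) powr (d - 1)"
    using assms(1,2) by (intro powr_mono2') auto
  have "sqrt (8 * real n) powr (d - 1) = 8 powr ((d - 1) / 2) * real n powr ((d - 1) / 2)"
    by (simp add: powr_half_sqrt[symmetric] powr_powr powr_mult)
  moreover have "real n * (c * real n powr ((d - 1) / 2)) / real n powr d
      = c * real n powr ((1 - d) / 2)" for c
  proof -
    have "real n * (c * real n powr ((d - 1) / 2)) / real n powr d
        = c * real n powr (1 + (d - 1) / 2 - d)"
      by (simp add: powr_mult_base powr_diff)
    also have "1 + (d - 1) / 2 - d = (1 - d) / 2" by (simp add: field_simps)
    finally show ?thesis .
  qed
  ultimately have "8 powr ((d - 1) / 2) * real n powr ((1 - d) / 2)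
      = real n * sqrt (8 * real n) powr (d - 1) / real n powr d"
    by simp
  also have "\<dots> \<le> real n * real (2 * k) powr (d - 1) / real n powr d"
    using sqrt_le by (intro divide_right_mono mult_left_mono) auto
  finally show ?thesis .
qed

lemma staircase_poa_ratio_ge:
  assumes "0 < d" "d < 1" "1 \<le> n"
  obtains T r dl s s' where "valid_game n T r dl" "is_NE (\<lambda>x. real x powr d) n r dl s"
    "feasible n r dl s'"
    "8 powr ((d - 1) / 2) * real n powr ((1 - d) / 2)
       \<le> total_cost (\<lambda>x. real x powr d) n T s / total_cost (\<lambda>x. real x powr d) n T s'"
proof -
  obtain k where k: "1 \<le> k" "tri k \<le> n" "n < tri (Suc k)"
    using tri_bracket[OF assms(3)] .
  define dl where "dl = (\<lambda>j. stair_slot k j + 1)"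
  define T where "T = k + 3"
  have game: "valid_game n T (\<lambda>_. 1) dl" "feasible n (\<lambda>_. 1) dl (\<lambda>_. 1)"
    by (auto simp: valid_game_def feasible_def dl_def T_def stair_slot_def)
  have NE: "is_NE (\<lambda>x. real x powr d) n (\<lambda>_. 1) dl (stair_slot k)"
    unfolding dl_def using stair_slot_is_NE[OF k(1,2) assms(2)] .
  have "8 powr ((d - 1) / 2) * real n powr ((1 - d) / 2)
      \<le> real n * real (2 * k) powr (d - 1) / real n powr d"
    using staircase_ratio_bound[OF assms(2) k(1)] square_le_double_tri[of k] k(2) by simp
  also have "\<dots> \<le> total_cost (\<lambda>x. real x powr d) n T (stair_slot k)
                      / total_cost (\<lambda>x. real x powr d) n T (\<lambda>_. 1)"
    using total_cost_stair_slot_ge[OF k assms(2), of T] total_cost_const_slot[of 1 T d n]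
    by (simp add: T_def divide_right_mono)
  finally show ?thesis by (rule that[OF game(1) NE game(2)])
qed

lemma worst_poa_powr_bounds:
  assumes "0 < d" "d < 1" "1 \<le> n"
  shows "8 powr ((d - 1) / 2) * real n powr ((1 - d) / 2) \<le> worst_poa (\<lambda>x. real x powr d) n"
    and "worst_poa (\<lambda>x. real x powr d) n \<le> 4 * real n powr ((1 - d) / 2)"
proof -
  define X where "X = {total_cost (\<lambda>x. real x powr d) n T s / total_cost (\<lambda>x. real x powr d) n T s'
    | T r dl s s'. valid_game n T r dl \<and> is_NE (\<lambda>x. real x powr d) n r dl s \<and> feasible n r dl s'}"
  have poa: "worst_poa (\<lambda>x. real x powr d) n = Sup X"
    by (simp add: worst_poa_def X_def)
  have X_le: "x \<le> 4 * real n powr ((1 - d) / 2)" if "x \<in> X" for x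
    using that poa_ratio_le[OF assms(1,2)] by (auto simp: X_def)
  obtain T r dl s s' where "valid_game n T r dl" "is_NE (\<lambda>x. real x powr d) n r dl s"
    "feasible n r dl s'" and stair:
    "8 powr ((d - 1) / 2) * real n powr ((1 - d) / 2)
       \<le> total_cost (\<lambda>x. real x powr d) n T s / total_cost (\<lambda>x. real x powr d) n T s'"
    using staircase_poa_ratio_ge[OF assms] .
  then have mem: "total_cost (\<lambda>x. real x powr d) n T s / total_cost (\<lambda>x. real x powr d) n T s' \<in> X"
    unfolding X_def by blast
  show "8 powr ((d - 1) / 2) * real n powr ((1 - d) / 2) \<le> worst_poa (\<lambda>x. real x powr d) n"
    unfolding poa using stair cSup_upper[OF mem bdd_aboveI[OF X_le]] by linarith
  show "worst_poa (\<lambda>x. real x powr d) n \<le> 4 * real n powr ((1 - d) / 2)"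
    unfolding poa using mem X_le by (intro cSup_least) auto
qed

theorem theorem1:
  fixes d :: real
  assumes "0 < d" and "d < 1"
  shows "(\<lambda>n. worst_poa (\<lambda>x. real x powr d) n) \<in> \<Theta>(\<lambda>n. real n powr ((1 - d) / 2))"
proof (rule bigthetaI')
  show "0 < 8 powr ((d - 1) / 2)" "(0::real) < 4" by simp_all
  show "\<forall>\<^sub>F n in at_top. 8 powr ((d - 1) / 2) * norm (real n powr ((1 - d) / 2))
      \<le> norm (worst_poa (\<lambda>x. real x powr d) n) \<and>
      norm (worst_poa (\<lambda>x. real x powr d) n) \<le> 4 * norm (real n powr ((1 - d) / 2))"
    using eventually_ge_at_top[of "1::nat"]
  proof eventually_elim
    case (elim n)
    note bounds = worst_poa_powr_bounds[OF assms elim]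
    have "0 \<le> 8 powr ((d - 1) / 2) * real n powr ((1 - d) / 2)" by simp
    then have "0 \<le> worst_poa (\<lambda>x. real x powr d) n" using bounds(1) by linarith
    then show ?case using bounds by simp
  qed
qed

end
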